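(* Let $F$ be a nondyadic nonarchimedean local field, $A$ a quaternion $F$-algebra, and $\mathcal O$ a Bass $O_F$-order in $A$ with Eichler invariant $e(\mathcal O)=0$. Then $\mathrm{Nr}(\mathcal O^\times)=O_F^{\times2}$.
   Context: Nondyadic means the residue characteristic is not $2$. An order is Gorenstein if its trace dual is projective as a left $\mathcal O$-module, and Bass if every overorder (including itself) is Gorenstein. With $\mathfrak k$ the residue field, the Eichler invariant of $\mathcal O\not\simeq M_2(O_F)$ is $1,0,-1$ according as $\mathcal O/J(\mathcal O)$ ($J$ = Jacobson radical) is $\mathfrak k\times\mathfrak k$, $\mathfrak k$, or the quadratic field extension of $\mathfrak k$. $\mathrm{Nr}$ is the reduced norm. *)

theory Defs
  imports Main
begin

text \<open>A normalised discrete valuation on a field is given by v :: 'a => int on the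
nonzero elements (the value of v at 0 is irrelevant; v(0) = infinity by convention).\<close>

definition discrete_valuation :: "('a::field \<Rightarrow> int) \<Rightarrow> bool" where
  "discrete_valuation v \<longleftrightarrow>
     (\<forall>x y. x \<noteq> 0 \<longrightarrow> y \<noteq> 0 \<longrightarrow> v (x * y) = v x + v y) \<and>
     (\<forall>x y. x \<noteq> 0 \<longrightarrow> y \<noteq> 0 \<longrightarrow> x + y \<noteq> 0 \<longrightarrow> v (x + y) \<ge> min (v x) (v y)) \<and>
     (\<exists>p. p \<noteq> 0 \<and> v p = 1)"

definition OF :: "('a::field \<Rightarrow> int) \<Rightarrow> 'a set" where
  "OF v = {x. x = 0 \<or> v x \<ge> 0}"

definition PF :: "('a::field \<Rightarrow> int) \<Rightarrow> 'a set" where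
  "PF v = {x. x = 0 \<or> v x > 0}"

definition OF_units :: "('a::field \<Rightarrow> int) \<Rightarrow> 'a set" where
  "OF_units v = {x. x \<noteq> 0 \<and> v x = 0}"

definition vclose :: "('a::field \<Rightarrow> int) \<Rightarrow> int \<Rightarrow> 'a \<Rightarrow> 'a \<Rightarrow> bool" where
  "vclose v N x y \<longleftrightarrow> x = y \<or> v (x - y) \<ge> N"

definition v_complete :: "('a::field \<Rightarrow> int) \<Rightarrow> bool" where
  "v_complete v \<longleftrightarrow>
     (\<forall>s :: nat \<Rightarrow> 'a. (\<forall>N. \<exists>M. \<forall>m\<ge>M. \<forall>n\<ge>M. vclose v N (s m) (s n)) \<longrightarrow>
        (\<exists>L. \<forall>N. \<exists>M. \<forall>n\<ge>M. vclose v N (s n) L))"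

definition finite_residue_field :: "('a::field \<Rightarrow> int) \<Rightarrow> bool" where
  "finite_residue_field v \<longleftrightarrow>
     (\<exists>S. finite S \<and> S \<subseteq> OF v \<and> (\<forall>x\<in>OF v. \<exists>s\<in>S. x - s \<in> PF v))"

definition nonarch_local_field :: "('a::field \<Rightarrow> int) \<Rightarrow> bool" where
  "nonarch_local_field v \<longleftrightarrow> discrete_valuation v \<and> v_complete v \<and> finite_residue_field v"

text \<open>nondyadic: residue characteristic is not 2, i.e. 2 is a unit of O_F\<close>
definition nondyadic :: "('a::field \<Rightarrow> int) \<Rightarrow> bool" where
  "nondyadic v \<longleftrightarrow> (2::'a) \<in> OF_units v"

text \<open>Since char F is not 2 (F nondyadic), every quaternion F-algebra is (a,b)_F with a,b nonzero:
basis 1,i,j,k=ij with i^2 = a, j^2 = b, ij = -ji.  Elements are coordinate 4-tuples.\<close>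

type_synonym 'a quat = "'a \<times> 'a \<times> 'a \<times> 'a"

fun qadd :: "'a::field quat \<Rightarrow> 'a quat \<Rightarrow> 'a quat" where
  "qadd (x0,x1,x2,x3) (y0,y1,y2,y3) = (x0+y0, x1+y1, x2+y2, x3+y3)"

fun qneg :: "'a::field quat \<Rightarrow> 'a quat" where
  "qneg (x0,x1,x2,x3) = (-x0, -x1, -x2, -x3)"

fun qsmul :: "'a::field \<Rightarrow> 'a quat \<Rightarrow> 'a quat" where
  "qsmul c (x0,x1,x2,x3) = (c*x0, c*x1, c*x2, c*x3)"

definition qzero :: "'a::field quat" where "qzero = (0,0,0,0)"
definition qone :: "'a::field quat" where "qone = (1,0,0,0)"

fun qmul :: "'a::field \<Rightarrow> 'a \<Rightarrow> 'a quat \<Rightarrow> 'a quat \<Rightarrow> 'a quat" where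
  "qmul a b (x0,x1,x2,x3) (y0,y1,y2,y3) =
     (x0*y0 + a*x1*y1 + b*x2*y2 - a*b*x3*y3,
      x0*y1 + x1*y0 - b*x2*y3 + b*x3*y2,
      x0*y2 + x2*y0 + a*x1*y3 - a*x3*y1,
      x0*y3 + x3*y0 + x1*y2 - x2*y1)"

fun nrd :: "'a::field \<Rightarrow> 'a \<Rightarrow> 'a quat \<Rightarrow> 'a" where
  "nrd a b (x0,x1,x2,x3) = x0*x0 - a*x1*x1 - b*x2*x2 + a*b*x3*x3"

fun trd :: "'a::field quat \<Rightarrow> 'a" where
  "trd (x0,x1,x2,x3) = 2*x0"

fun lincomb :: "(nat \<Rightarrow> 'a::field) \<Rightarrow> 'a quat list \<Rightarrow> 'a quat" where
  "lincomb c [] = qzero"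
| "lincomb c (g # G) = qadd (qsmul (c 0) g) (lincomb (\<lambda>i. c (Suc i)) G)"

definition is_lattice :: "('a::field \<Rightarrow> int) \<Rightarrow> 'a quat set \<Rightarrow> bool" where
  "is_lattice v L \<longleftrightarrow>
     (\<exists>G. L = {lincomb c G | c. \<forall>i. c i \<in> OF v} \<and>
          {lincomb c G | c. True} = UNIV)"

definition is_order :: "('a::field \<Rightarrow> int) \<Rightarrow> 'a \<Rightarrow> 'a \<Rightarrow> 'a quat set \<Rightarrow> bool" where
  "is_order v a b R \<longleftrightarrow> is_lattice v R \<and> qone \<in> R \<and>
     (\<forall>x\<in>R. \<forall>y\<in>R. qmul a b x y \<in> R)"

definition trace_dual :: "('a::field \<Rightarrow> int) \<Rightarrow> 'a \<Rightarrow> 'a \<Rightarrow> 'a quat set \<Rightarrow> 'a quat set" where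
  "trace_dual v a b R = {x. \<forall>y\<in>R. trd (qmul a b x y) \<in> OF v}"

text \<open>A left R-submodule M of A is projective: it is a direct summand of a free left
R-module R^n, i.e. there are left R-linear maps f : R^n -> M and g : M -> R^n with
f o g = id on M.  Elements of R^n are maps nat => A supported in {..<n} with values in R.\<close>
definition free_mod :: "'a::field quat set \<Rightarrow> nat \<Rightarrow> (nat \<Rightarrow> 'a quat) set" where
  "free_mod R n = {x. (\<forall>i<n. x i \<in> R) \<and> (\<forall>i\<ge>n. x i = qzero)}"

definition left_projective ::
  "'a::field \<Rightarrow> 'a \<Rightarrow> 'a quat set \<Rightarrow> 'a quat set \<Rightarrow> bool" where
  "left_projective a b R M \<longleftrightarrow>
     (\<exists>n (f :: (nat \<Rightarrow> 'a quat) \<Rightarrow> 'a quat) (g :: 'a quat \<Rightarrow> nat \<Rightarrow> 'a quat).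
        (\<forall>x\<in>free_mod R n. f x \<in> M) \<and>
        (\<forall>x\<in>free_mod R n. \<forall>y\<in>free_mod R n. f (\<lambda>i. qadd (x i) (y i)) = qadd (f x) (f y)) \<and>
        (\<forall>r\<in>R. \<forall>x\<in>free_mod R n. f (\<lambda>i. qmul a b r (x i)) = qmul a b r (f x)) \<and>
        (\<forall>m\<in>M. g m \<in> free_mod R n) \<and>
        (\<forall>m\<in>M. \<forall>m'\<in>M. g (qadd m m') = (\<lambda>i. qadd (g m i) (g m' i))) \<and>
        (\<forall>r\<in>R. \<forall>m\<in>M. g (qmul a b r m) = (\<lambda>i. qmul a b r (g m i))) \<and>
        (\<forall>m\<in>M. f (g m) = m))"

definition gorenstein :: "('a::field \<Rightarrow> int) \<Rightarrow> 'a \<Rightarrow> 'a \<Rightarrow> 'a quat set \<Rightarrow> bool" where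
  "gorenstein v a b R \<longleftrightarrow> left_projective a b R (trace_dual v a b R)"

definition bass :: "('a::field \<Rightarrow> int) \<Rightarrow> 'a \<Rightarrow> 'a \<Rightarrow> 'a quat set \<Rightarrow> bool" where
  "bass v a b R \<longleftrightarrow> is_order v a b R \<and>
     (\<forall>R'. is_order v a b R' \<and> R \<subseteq> R' \<longrightarrow> gorenstein v a b R')"

definition left_ideal :: "'a::field \<Rightarrow> 'a \<Rightarrow> 'a quat set \<Rightarrow> 'a quat set \<Rightarrow> bool" where
  "left_ideal a b R I \<longleftrightarrow> I \<subseteq> R \<and> qzero \<in> I \<and>
     (\<forall>x\<in>I. \<forall>y\<in>I. qadd x y \<in> I) \<and> (\<forall>x\<in>I. qneg x \<in> I) \<and>
     (\<forall>r\<in>R. \<forall>x\<in>I. qmul a b r x \<in> I)"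

definition maximal_left_ideal :: "'a::field \<Rightarrow> 'a \<Rightarrow> 'a quat set \<Rightarrow> 'a quat set \<Rightarrow> bool" where
  "maximal_left_ideal a b R I \<longleftrightarrow> left_ideal a b R I \<and> I \<noteq> R \<and>
     (\<forall>I'. left_ideal a b R I' \<and> I \<subseteq> I' \<longrightarrow> I' = I \<or> I' = R)"

definition jacobson :: "'a::field \<Rightarrow> 'a \<Rightarrow> 'a quat set \<Rightarrow> 'a quat set" where
  "jacobson a b R = {x\<in>R. \<forall>I. maximal_left_ideal a b R I \<longrightarrow> x \<in> I}"

text \<open>Eichler invariant 0: R/J(R) is isomorphic (as a ring) to the residue field
k = O_F/p_F.  Expressed by a map psi : R -> O_F inducing a ring isomorphism
R/J(R) -> O_F/p_F: additive and multiplicative modulo p_F, unital modulo p_F,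
surjective modulo p_F, with psi(x) in p_F exactly for x in J(R).\<close>
definition eichler_zero :: "('a::field \<Rightarrow> int) \<Rightarrow> 'a \<Rightarrow> 'a \<Rightarrow> 'a quat set \<Rightarrow> bool" where
  "eichler_zero v a b R \<longleftrightarrow>
     (\<exists>psi. (\<forall>x\<in>R. psi x \<in> OF v) \<and>
        (\<forall>x\<in>R. \<forall>y\<in>R. psi (qadd x y) - (psi x + psi y) \<in> PF v) \<and>
        (\<forall>x\<in>R. \<forall>y\<in>R. psi (qmul a b x y) - psi x * psi y \<in> PF v) \<and>
        psi qone - 1 \<in> PF v \<and>
        (\<forall>c\<in>OF v. \<exists>x\<in>R. psi x - c \<in> PF v) \<and>
        (\<forall>x\<in>R. psi x \<in> PF v \<longleftrightarrow> x \<in> jacobson a b R))"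

definition qunits :: "'a::field \<Rightarrow> 'a \<Rightarrow> 'a quat set \<Rightarrow> 'a quat set" where
  "qunits a b R = {x\<in>R. \<exists>y\<in>R. qmul a b x y = qone \<and> qmul a b y x = qone}"

end

theory Submission
  imports Defs
begin

text \<open>
  Norms and traces of elements of an order are integral: the norms of the powers of x stay
  bounded, and trd x = Nr(1 + x) - 1 - Nr x. Hence the order R is stable under the canonical
  involution x \<mapsto> x*. For the residue map \<psi> of Eichler invariant 0, the kernel of x \<mapsto> \<psi>(x*)
  is again a maximal left ideal, so it contains J(R) = ker \<psi>. Every residue is the residue of a
  scalar c, because c \<mapsto> \<psi>(c) induces an injective, hence bijective, self-map of the finite
  residue field. Comparing x with such a scalar gives \<psi>(x*) = \<psi>(x) mod p_F, and therefore
  Nr x = x x* = c^2 mod p_F. For a unit x, Newton's iteration for the square root (2 is a unit)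
  lifts this congruence to Nr x = u^2 with u a unit. Conversely u^2 = Nr u.
\<close>

lemma finite_quotient_inj_imp_surj:
  assumes equiv: "equiv A r" and finite: "finite (A // r)" and maps_to: "f ` A \<subseteq> A"
    and inj: "\<And>x y. x \<in> A \<Longrightarrow> y \<in> A \<Longrightarrow> (f x, f y) \<in> r \<Longrightarrow> (x, y) \<in> r"
    and y: "y \<in> A"
  shows "\<exists>x\<in>A. (f x, y) \<in> r"
proof -
  define rep where "rep X = (SOME x. x \<in> X)" for X :: "'a set"
  have rep: "rep X \<in> A \<and> X = r `` {rep X}" if "X \<in> A // r" for X
  proof -
    obtain x where x: "x \<in> A" "X = r `` {x}"
      using \<open>X \<in> A // r\<close> by (rule quotientE)
    then have "rep X \<in> X"
      unfolding rep_def using equiv_class_self[OF equiv] by (metis someI)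
    then have xr: "(x, rep X) \<in> r"
      using x(2) by simp
    then have "rep X \<in> A"
      using equiv_type[OF equiv] by blast
    moreover have "X = r `` {rep X}"
      using x(2) equiv_class_eq[OF equiv xr] by (rule trans)
    ultimately show ?thesis ..
  qed
  define G where "G X = r `` {f (rep X)}" for X
  have "G X \<in> A // r" if "X \<in> A // r" for X
    unfolding G_def using rep[OF that] maps_to by (blast intro: quotientI)
  then have "G ` (A // r) \<subseteq> A // r"
    by blast
  moreover have "inj_on G (A // r)"
  proof (rule inj_onI)
    fix X Y assume X: "X \<in> A // r" and Y: "Y \<in> A // r" and "G X = G Y"
    then have "(f (rep X), f (rep Y)) \<in> r"
      using rep maps_to eq_equiv_class_iff[OF equiv] unfolding G_def by blast
    then have "r `` {rep X} = r `` {rep Y}"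
      using rep[OF X] rep[OF Y] inj equiv_class_eq[OF equiv] by blast
    then show "X = Y"
      using rep[OF X] rep[OF Y] by simp
  qed
  ultimately have "G ` (A // r) = A // r"
    using endo_inj_surj[OF finite] by blast
  moreover have "r `` {y} \<in> A // r"
    using y by (rule quotientI)
  ultimately have "r `` {y} \<in> G ` (A // r)"
    by simp
  then obtain X where X: "X \<in> A // r" "r `` {f (rep X)} = r `` {y}"
    unfolding G_def by auto
  then have "f (rep X) \<in> A"
    using rep maps_to by blast
  then have "(f (rep X), y) \<in> r"
    using X(2) eq_equiv_class_iff[OF equiv _ y] by blast
  then show ?thesis
    using rep[OF X(1)] by blast
qed

section \<open>Discrete valuations\<close>

lemma OF_units_iff: "x \<in> OF_units v \<longleftrightarrow> x \<in> OF v \<and> x \<notin> PF v"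
  unfolding OF_units_def OF_def PF_def by auto

lemma PF_subset_OF: "PF v \<subseteq> OF v"
  unfolding PF_def OF_def by auto

definition val_ge :: "('a::field \<Rightarrow> int) \<Rightarrow> int \<Rightarrow> 'a \<Rightarrow> bool" where
  "val_ge v B x \<longleftrightarrow> x = 0 \<or> v x \<ge> B"

lemma val_ge_zero [simp]: "val_ge v B 0"
  by (simp add: val_ge_def)

lemma val_ge_mono: "val_ge v B x \<Longrightarrow> C \<le> B \<Longrightarrow> val_ge v C x"
  unfolding val_ge_def by auto

lemma val_ge_self: "val_ge v (v x) x"
  by (simp add: val_ge_def)

lemma OF_iff_val_ge: "x \<in> OF v \<longleftrightarrow> val_ge v 0 x"
  unfolding OF_def val_ge_def by auto

lemma PF_iff_val_ge: "x \<in> PF v \<longleftrightarrow> val_ge v 1 x"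
  unfolding PF_def val_ge_def by auto

lemma val_ge_all_imp_zero:
  assumes "\<And>n. val_ge v (int n) x"
  shows "x = 0"
proof (rule ccontr)
  assume "x \<noteq> 0"
  then have "int (nat (v x) + 1) \<le> v x"
    using assms[of "nat (v x) + 1"] unfolding val_ge_def by blast
  then show False by (simp split: if_splits)
qed

lemma vclose_iff_val_ge: "vclose v N x y \<longleftrightarrow> val_ge v N (x - y)"
  unfolding vclose_def val_ge_def by auto

definition residue_rel :: "('a::field \<Rightarrow> int) \<Rightarrow> ('a \<times> 'a) set" where
  "residue_rel v = {(x, y). x \<in> OF v \<and> y \<in> OF v \<and> x - y \<in> PF v}"

locale valued_field =
  fixes v :: "'a::field \<Rightarrow> int"
  assumes discrete_valuation: "discrete_valuation v"
begin

lemma val_mult: "x \<noteq> 0 \<Longrightarrow> y \<noteq> 0 \<Longrightarrow> v (x * y) = v x + v y"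
  using discrete_valuation unfolding discrete_valuation_def by blast

lemma val_add_ge_min: "x \<noteq> 0 \<Longrightarrow> y \<noteq> 0 \<Longrightarrow> x + y \<noteq> 0 \<Longrightarrow> v (x + y) \<ge> min (v x) (v y)"
  using discrete_valuation unfolding discrete_valuation_def by blast

lemma val_one: "v 1 = 0"
  using val_mult[of 1 1] by simp

lemma val_minus_one: "v (-1) = 0"
  using val_mult[of "-1" "-1"] val_one by simp

lemma val_uminus: "v (- x) = v x"
  using val_mult[of "-1" x] val_minus_one by (cases "x = 0") auto

lemma val_inverse: "x \<noteq> 0 \<Longrightarrow> v (inverse x) = - v x"
  using val_mult[of x "inverse x"] val_one by simp

lemma val_power: "x \<noteq> 0 \<Longrightarrow> v (x ^ m) = int m * v x"
  by (induction m) (auto simp: val_one val_mult algebra_simps)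

lemma val_ge_add: "val_ge v B x \<Longrightarrow> val_ge v B y \<Longrightarrow> val_ge v B (x + y)"
  using val_add_ge_min[of x y] unfolding val_ge_def by (cases "x = 0 \<or> y = 0 \<or> x + y = 0") auto

lemma val_ge_uminus: "val_ge v B x \<Longrightarrow> val_ge v B (- x)"
  unfolding val_ge_def by (auto simp: val_uminus)

lemma val_ge_diff: "val_ge v B x \<Longrightarrow> val_ge v B y \<Longrightarrow> val_ge v B (x - y)"
  using val_ge_add[of B x "- y"] val_ge_uminus[of B y] by simp

lemma val_ge_mult: "val_ge v B x \<Longrightarrow> val_ge v C y \<Longrightarrow> val_ge v (B + C) (x * y)"
  unfolding val_ge_def by (cases "x = 0 \<or> y = 0") (auto simp: val_mult)

lemma OF_add: "x \<in> OF v \<Longrightarrow> y \<in> OF v \<Longrightarrow> x + y \<in> OF v"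
  by (simp add: OF_iff_val_ge val_ge_add)

lemma OF_diff: "x \<in> OF v \<Longrightarrow> y \<in> OF v \<Longrightarrow> x - y \<in> OF v"
  by (simp add: OF_iff_val_ge val_ge_diff)

lemma OF_mult: "x \<in> OF v \<Longrightarrow> y \<in> OF v \<Longrightarrow> x * y \<in> OF v"
  using val_ge_mult[of 0 x 0 y] by (simp add: OF_iff_val_ge)

lemma OF_one: "1 \<in> OF v"
  by (simp add: OF_def val_one)

lemma OF_minus_one: "-1 \<in> OF v"
  by (simp add: OF_def val_minus_one)

lemma PF_add: "x \<in> PF v \<Longrightarrow> y \<in> PF v \<Longrightarrow> x + y \<in> PF v"
  by (simp add: PF_iff_val_ge val_ge_add)

lemma PF_uminus: "x \<in> PF v \<Longrightarrow> - x \<in> PF v"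
  by (simp add: PF_iff_val_ge val_ge_uminus)

lemma PF_diff: "x \<in> PF v \<Longrightarrow> y \<in> PF v \<Longrightarrow> x - y \<in> PF v"
  by (simp add: PF_iff_val_ge val_ge_diff)

lemma PF_mult_right: "x \<in> PF v \<Longrightarrow> y \<in> OF v \<Longrightarrow> x * y \<in> PF v"
  using val_ge_mult[of 1 x 0 y] by (simp add: OF_iff_val_ge PF_iff_val_ge)

lemma PF_mult_left: "x \<in> OF v \<Longrightarrow> y \<in> PF v \<Longrightarrow> x * y \<in> PF v"
  using PF_mult_right[of y x] by (simp add: mult.commute)

lemma one_notin_PF: "1 \<notin> PF v"
  by (simp add: PF_def val_one)

lemma PF_cong_trans: "x - y \<in> PF v \<Longrightarrow> y - z \<in> PF v \<Longrightarrow> x - z \<in> PF v"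
  using PF_add[of "x - y" "y - z"] by simp

lemma PF_cong_sym: "x - y \<in> PF v \<Longrightarrow> y - x \<in> PF v"
  using PF_uminus[of "x - y"] by simp

lemma PF_cong_PF: "x - y \<in> PF v \<Longrightarrow> y \<in> PF v \<Longrightarrow> x \<in> PF v"
  using PF_add[of "x - y" y] by simp

lemma PF_cong_mult:
  assumes "x \<in> OF v" "y' \<in> OF v" "x - x' \<in> PF v" "y - y' \<in> PF v"
  shows "x * y - x' * y' \<in> PF v"
proof -
  have "x * y - x' * y' = x * (y - y') + (x - x') * y'"
    by (simp add: algebra_simps)
  then show ?thesis
    using assms PF_add PF_mult_left PF_mult_right by metis
qed

lemma OF_units_if_near_one:
  assumes "x - 1 \<in> PF v"
  shows "x \<in> OF_units v"
proof -
  have "x \<notin> PF v"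
    using PF_diff[of x "x - 1"] assms one_notin_PF by auto
  moreover have "x \<in> OF v"
    using OF_add[of "x - 1" 1] assms PF_subset_OF OF_one by auto
  ultimately show ?thesis
    unfolding OF_units_iff by simp
qed

lemma OF_units_mult: "x \<in> OF_units v \<Longrightarrow> y \<in> OF_units v \<Longrightarrow> x * y \<in> OF_units v"
  unfolding OF_units_def by (simp add: val_mult)

lemma OF_units_inverse: "x \<in> OF_units v \<Longrightarrow> inverse x \<in> OF_units v"
  unfolding OF_units_def by (simp add: val_inverse)

lemma OF_units_OF: "x \<in> OF_units v \<Longrightarrow> x \<in> OF v"
  unfolding OF_units_iff by simp

lemma val_ge_divide_unit:
  assumes "val_ge v B x" and "u \<in> OF_units v"
  shows "val_ge v B (x / u)"
proof -
  have "val_ge v 0 (inverse u)"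
    using assms(2) OF_units_inverse OF_units_OF OF_iff_val_ge by blast
  then show ?thesis
    using val_ge_mult[OF assms(1)] unfolding divide_inverse by fastforce
qed

lemma OF_if_powers_bounded:
  assumes bounded: "\<And>m. val_ge v C (x ^ m)"
  shows "x \<in> OF v"
proof (rule ccontr)
  assume "x \<notin> OF v"
  then have "x \<noteq> 0" and neg: "v x \<le> -1"
    unfolding OF_def by auto
  define m where "m = nat (- C) + 1"
  have "v (x ^ m) \<ge> C"
    using bounded[of m] \<open>x \<noteq> 0\<close> unfolding val_ge_def by simp
  moreover have "int m * v x \<le> int m * (-1)"
    using neg by (intro mult_left_mono) auto
  moreover have "v (x ^ m) = int m * v x"
    using \<open>x \<noteq> 0\<close> by (rule val_power)
  moreover have "int m > - C"
    unfolding m_def by simp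
  ultimately show False
    by linarith
qed

lemma equiv_residue_rel: "equiv (OF v) (residue_rel v)"
proof (rule equivI)
  show "residue_rel v \<subseteq> OF v \<times> OF v"
    unfolding residue_rel_def by auto
  show "refl_on (OF v) (residue_rel v)"
    unfolding refl_on_def residue_rel_def by (auto simp: PF_def)
  show "sym (residue_rel v)"
    unfolding sym_def residue_rel_def using PF_cong_sym by blast
  show "trans (residue_rel v)"
    unfolding trans_def residue_rel_def using PF_cong_trans by blast
qed

lemma finite_residue_quotient:
  assumes "finite_residue_field v"
  shows "finite (OF v // residue_rel v)"
proof -
  obtain S where S: "finite S" "S \<subseteq> OF v" "\<forall>x\<in>OF v. \<exists>s\<in>S. x - s \<in> PF v"
    using assms unfolding finite_residue_field_def by blast
  have "OF v // residue_rel v \<subseteq> (\<lambda>s. residue_rel v `` {s}) ` S"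
  proof
    fix X assume "X \<in> OF v // residue_rel v"
    then obtain x where x: "x \<in> OF v" "X = residue_rel v `` {x}"
      by (rule quotientE)
    then obtain s where "s \<in> S" "x - s \<in> PF v"
      using S by blast
    then have "X = residue_rel v `` {s}"
      using x S(2) equiv_class_eq[OF equiv_residue_rel] unfolding residue_rel_def by blast
    then show "X \<in> (\<lambda>s. residue_rel v `` {s}) ` S"
      using \<open>s \<in> S\<close> by blast
  qed
  then show ?thesis
    using S(1) finite_subset by blast
qed

subsection \<open>Square roots of units near 1\<close>

lemma newton_sqrt_step:
  assumes two: "2 \<in> OF_units v" and y: "y - 1 \<in> PF v"
    and e: "val_ge v B (y * y - w)" and B: "B \<ge> 1"
  defines "d \<equiv> (y * y - w) / 2"
  shows "(y - d) - 1 \<in> PF v \<and> val_ge v (B + 1) ((y - d) * (y - d) - w)"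
proof -
  have d: "val_ge v B d"
    unfolding d_def using e two by (rule val_ge_divide_unit)
  have "d \<in> PF v"
    unfolding PF_iff_val_ge by (rule val_ge_mono[OF d B])
  then have "(y - 1) - d \<in> PF v"
    by (rule PF_diff[OF y])
  then have shifted: "(y - d) - 1 \<in> PF v"
    by (simp add: diff_right_commute)
  have "2 * d = y * y - w"
    using two unfolding d_def OF_units_def by simp
  moreover have "(y - d) * (y - d) - w - ((y * y - w) * (1 - y) + d * d) = y * (y * y - w - 2 * d)"
    by (simp add: algebra_simps)
  ultimately have expand: "(y - d) * (y - d) - w = (y * y - w) * (1 - y) + d * d"
    by simp
  have "val_ge v 1 (1 - y)"
    using PF_uminus[OF y] unfolding PF_iff_val_ge by simp
  then have "val_ge v (B + 1) ((y * y - w) * (1 - y))"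
    using e val_ge_mult by blast
  moreover have "val_ge v (B + 1) (d * d)"
    using val_ge_mono[OF val_ge_mult[OF d d]] B by simp
  ultimately have "val_ge v (B + 1) ((y - d) * (y - d) - w)"
    unfolding expand by (rule val_ge_add)
  with shifted show ?thesis by blast
qed

lemma converges_if_fast_increments:
  assumes complete: "v_complete v"
    and increments: "\<And>k. val_ge v (int k + 1) (y (Suc k) - y k)"
  shows "\<exists>L. \<forall>n. val_ge v (int n + 1) (y n - L)"
proof -
  have tail: "val_ge v (int M + 1) (y m - y M)" if "M \<le> m" for M m
    using that
  proof (induction m rule: dec_induct)
    case base
    then show ?case by simp
  next
    case (step m)
    have "val_ge v (int M + 1) (y (Suc m) - y m)"
      using val_ge_mono[OF increments[of m]] step(1) by simp
    from val_ge_add[OF this step(3)] show ?case by simp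
  qed
  have "\<exists>M. \<forall>m\<ge>M. \<forall>n\<ge>M. vclose v N (y m) (y n)" for N
  proof (intro exI allI impI)
    fix m n assume "nat N \<le> m" "nat N \<le> n"
    then have "val_ge v (int (nat N) + 1) ((y m - y (nat N)) - (y n - y (nat N)))"
      using val_ge_diff tail by blast
    then have "val_ge v (int (nat N) + 1) (y m - y n)"
      by simp
    then show "vclose v N (y m) (y n)"
      unfolding vclose_iff_val_ge by (rule val_ge_mono) simp
  qed
  then obtain L where L: "\<And>N. \<exists>M. \<forall>n\<ge>M. vclose v N (y n) L"
    using complete unfolding v_complete_def by blast
  have "val_ge v (int n + 1) (y n - L)" for n
  proof -
    obtain M where M: "\<forall>m\<ge>M. vclose v (int n + 1) (y m) L"
      using L by blast
    define m where "m = max M n"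
    have "val_ge v (int n + 1) (y m - L)" "val_ge v (int n + 1) (y m - y n)"
      using M tail[of n m] unfolding m_def vclose_iff_val_ge by simp_all
    then have "val_ge v (int n + 1) ((y m - L) - (y m - y n))"
      by (rule val_ge_diff)
    then show ?thesis by simp
  qed
  then show ?thesis by blast
qed

lemma sqrt_near_one:
  assumes complete: "v_complete v" and two: "2 \<in> OF_units v" and w: "w - 1 \<in> PF v"
  shows "\<exists>L. L * L = w \<and> L - 1 \<in> PF v"
proof -
  define y where "y = rec_nat 1 (\<lambda>_ z. z - (z * z - w) / 2)"
  have y0: "y 0 = 1" and ySuc: "y (Suc k) = y k - (y k * y k - w) / 2" for k
    unfolding y_def by simp_all
  have invariant: "y k - 1 \<in> PF v \<and> val_ge v (int k + 1) (y k * y k - w)" for k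
  proof (induction k)
    case 0
    then show ?case
      using PF_uminus[OF w] y0 by (simp add: PF_iff_val_ge)
  next
    case (Suc k)
    then show ?case
      using newton_sqrt_step[OF two, of "y k" "int k + 1" w] unfolding ySuc
      by (simp add: add.commute)
  qed
  have "val_ge v (int k + 1) (y (Suc k) - y k)" for k
  proof -
    have "val_ge v (int k + 1) ((y k * y k - w) / 2)"
      using invariant[of k] two val_ge_divide_unit by blast
    then have "val_ge v (int k + 1) (- ((y k * y k - w) / 2))"
      by (rule val_ge_uminus)
    then show ?thesis
      unfolding ySuc by simp
  qed
  then obtain L where L: "\<And>n. val_ge v (int n + 1) (y n - L)"
    using converges_if_fast_increments[OF complete] by blast
  have "1 - L \<in> PF v"
    using L[of 0] y0 by (simp add: PF_iff_val_ge)
  then have L1: "L - 1 \<in> PF v"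
    using PF_uminus by fastforce
  have "val_ge v (int n) (L * L - w)" for n
  proof -
    have "y n \<in> OF v" "L \<in> OF v"
      using OF_units_if_near_one invariant L1 OF_units_OF by blast+
    then have "val_ge v 0 (y n + L)"
      using OF_add by (simp add: OF_iff_val_ge)
    then have "val_ge v (int n + 1 + 0) ((y n - L) * (y n + L))"
      by (rule val_ge_mult[OF L[of n]])
    then have "val_ge v (int n + 1) ((y n * y n - w) - (y n - L) * (y n + L))"
      using invariant[of n] val_ge_diff by simp
    moreover have "(y n * y n - w) - (y n - L) * (y n + L) = L * L - w"
      by (simp add: algebra_simps)
    ultimately show ?thesis
      using val_ge_mono[of v "int n + 1"] by auto
  qed
  then have "L * L - w = 0"
    by (rule val_ge_all_imp_zero)
  then have "L * L = w"
    by simp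
  with L1 show ?thesis by blast
qed

lemma square_of_unit_if_square_mod_PF:
  assumes complete: "v_complete v" and two: "2 \<in> OF_units v"
    and x: "x \<in> OF_units v" and c: "c \<in> OF v" and xc: "x - c * c \<in> PF v"
  shows "\<exists>u\<in>OF_units v. x = u * u"
proof -
  have "c * c \<notin> PF v"
    using PF_add[OF xc, of "c * c"] x unfolding OF_units_iff by auto
  then have cu: "c \<in> OF_units v"
    using c PF_mult_right[of c c] unfolding OF_units_iff by blast
  then have ccu: "inverse (c * c) \<in> OF_units v"
    using OF_units_mult OF_units_inverse by blast
  define w where "w = x * inverse (c * c)"
  have "w - 1 = (x - c * c) * inverse (c * c)"
    using cu unfolding w_def OF_units_def by (simp add: field_simps)
  then have "w - 1 \<in> PF v"
    using PF_mult_right[OF xc] ccu OF_units_OF by simp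
  then obtain L where L: "L * L = w" "L - 1 \<in> PF v"
    using sqrt_near_one[OF complete two] by blast
  have "x = (c * L) * (c * L)"
    using L(1) cu unfolding w_def OF_units_def by (simp add: field_simps)
  moreover have "c * L \<in> OF_units v"
    using OF_units_mult[OF cu OF_units_if_near_one[OF L(2)]] .
  ultimately show ?thesis by blast
qed

end

section \<open>Quaternion arithmetic and orders\<close>

definition qconj :: "'a::field quat \<Rightarrow> 'a quat" where
  "qconj x = (case x of (x0,x1,x2,x3) \<Rightarrow> (x0,-x1,-x2,-x3))"

definition qscalar :: "'a::field \<Rightarrow> 'a quat" where
  "qscalar c = (c,0,0,0)"

lemma nrd_qmul: "nrd a b (qmul a b x y) = nrd a b x * nrd a b y"
  by (cases x; cases y) (simp add: algebra_simps)

lemma qmul_qconj: "qmul a b x (qconj x) = qscalar (nrd a b x)"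
  by (cases x) (simp add: qconj_def qscalar_def algebra_simps)

lemma qconj_qmul: "qconj (qmul a b x y) = qmul a b (qconj y) (qconj x)"
  by (cases x; cases y) (simp add: qconj_def algebra_simps)

lemma qconj_qadd: "qconj (qadd x y) = qadd (qconj x) (qconj y)"
  by (cases x; cases y) (simp add: qconj_def)

lemma qconj_qneg: "qconj (qneg x) = qneg (qconj x)"
  by (cases x) (simp add: qconj_def)

lemma qconj_qone: "qconj qone = qone"
  by (simp add: qconj_def qone_def)

lemma qconj_qconj: "qconj (qconj x) = x"
  by (cases x) (simp add: qconj_def)

lemma qconj_qscalar: "qconj (qscalar c) = qscalar c"
  by (simp add: qconj_def qscalar_def)

lemma qconj_eq_trd_minus: "qconj x = qadd (qsmul (trd x) qone) (qneg x)"
  by (cases x) (simp add: qconj_def qone_def)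

lemma trd_eq_nrd: "trd x = nrd a b (qadd qone x) - 1 - nrd a b x"
  by (cases x) (simp add: qone_def algebra_simps)

lemma qmul_qscalar: "qmul a b (qscalar c) (qscalar d) = qscalar (c * d)"
  by (simp add: qscalar_def)

lemma qmul_qone_right: "qmul a b x qone = x"
  by (cases x) (simp add: qone_def)

lemma qscalar_one: "qscalar 1 = qone"
  by (simp add: qscalar_def qone_def)

lemma qscalar_eq_qsmul: "qscalar c = qsmul c qone"
  by (simp add: qscalar_def qone_def)

lemma qscalar_diff: "qscalar (c - d) = qadd (qscalar c) (qneg (qscalar d))"
  by (simp add: qscalar_def)

lemma qneg_eq_qsmul: "qneg x = qsmul (-1) x"
  by (cases x) simp

lemma qadd_qneg_cancel: "qadd (qadd x (qneg y)) y = x"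
  by (cases x; cases y) simp

lemma qadd_qneg_self: "qadd x (qneg x) = qzero"
  by (cases x) (simp add: qzero_def)

lemma qadd_qzero_qneg: "qadd qzero (qneg x) = qneg x"
  by (cases x) (simp add: qzero_def)

lemma qadd_qneg_qone: "qadd x (qneg (qadd x (qneg qone))) = qone"
  by (cases x) (simp add: qone_def)

lemma nrd_qone: "nrd a b qone = 1"
  by (simp add: qone_def)

lemma nrd_qscalar: "nrd a b (qscalar c) = c * c"
  by (simp add: qscalar_def)

lemma lincomb_add: "qadd (lincomb c G) (lincomb d G) = lincomb (\<lambda>i. c i + d i) G"
proof (induction G arbitrary: c d)
  case Nil
  then show ?case by (simp add: qzero_def)
next
  case (Cons g G)
  have "lincomb (\<lambda>i. c i + d i) (g # G) = qadd (qsmul (c 0 + d 0) g)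
          (qadd (lincomb (\<lambda>i. c (Suc i)) G) (lincomb (\<lambda>i. d (Suc i)) G))"
    by (simp add: Cons.IH)
  then show ?case
    by (cases g; cases "lincomb (\<lambda>i. c (Suc i)) G"; cases "lincomb (\<lambda>i. d (Suc i)) G")
       (simp add: algebra_simps)
qed

lemma lincomb_smul: "qsmul r (lincomb c G) = lincomb (\<lambda>i. r * c i) G"
proof (induction G arbitrary: c)
  case Nil
  then show ?case by (simp add: qzero_def)
next
  case (Cons g G)
  have "lincomb (\<lambda>i. r * c i) (g # G) = qadd (qsmul (r * c 0) g) (qsmul r (lincomb (\<lambda>i. c (Suc i)) G))"
    by (simp add: Cons.IH)
  then show ?case
    by (cases g; cases "lincomb (\<lambda>i. c (Suc i)) G") (simp add: algebra_simps)
qed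

fun qval_ge :: "('a::field \<Rightarrow> int) \<Rightarrow> int \<Rightarrow> 'a quat \<Rightarrow> bool" where
  "qval_ge v B (x0,x1,x2,x3) \<longleftrightarrow> val_ge v B x0 \<and> val_ge v B x1 \<and> val_ge v B x2 \<and> val_ge v B x3"

fun qpow :: "'a::field \<Rightarrow> 'a \<Rightarrow> 'a quat \<Rightarrow> nat \<Rightarrow> 'a quat" where
  "qpow a b x 0 = qone"
| "qpow a b x (Suc m) = qmul a b x (qpow a b x m)"

lemma nrd_qpow: "nrd a b (qpow a b x m) = nrd a b x ^ m"
  by (induction m) (auto simp: nrd_qone nrd_qmul)

locale quaternion_order = valued_field v for v :: "'a::field \<Rightarrow> int" +
  fixes a b :: 'a and R :: "'a quat set"
  assumes is_order: "is_order v a b R"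
begin

lemma order_qmul: "x \<in> R \<Longrightarrow> y \<in> R \<Longrightarrow> qmul a b x y \<in> R"
  using is_order unfolding is_order_def by blast

lemma order_qone: "qone \<in> R"
  using is_order unfolding is_order_def by blast

lemma order_lincomb: obtains G where "R = {lincomb c G | c. \<forall>i. c i \<in> OF v}"
  using is_order unfolding is_order_def is_lattice_def by blast

lemma order_qadd:
  assumes "x \<in> R" "y \<in> R"
  shows "qadd x y \<in> R"
proof -
  obtain G where G: "R = {lincomb c G | c. \<forall>i. c i \<in> OF v}"
    by (rule order_lincomb)
  then obtain c d where "x = lincomb c G" "y = lincomb d G" "\<forall>i. c i \<in> OF v" "\<forall>i. d i \<in> OF v"
    using assms by auto
  then show ?thesis
    using G OF_add by (auto simp: lincomb_add)
qed

lemma order_qsmul: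
  assumes "r \<in> OF v" "x \<in> R"
  shows "qsmul r x \<in> R"
proof -
  obtain G where G: "R = {lincomb c G | c. \<forall>i. c i \<in> OF v}"
    by (rule order_lincomb)
  then obtain c where "x = lincomb c G" "\<forall>i. c i \<in> OF v"
    using assms by auto
  then show ?thesis
    using G assms(1) OF_mult by (auto simp: lincomb_smul)
qed

lemma order_qneg: "x \<in> R \<Longrightarrow> qneg x \<in> R"
  unfolding qneg_eq_qsmul by (rule order_qsmul[OF OF_minus_one])

lemma order_qzero: "qzero \<in> R"
  using order_qadd[OF order_qone order_qneg[OF order_qone]] by (simp add: qadd_qneg_self)

lemma order_qscalar: "c \<in> OF v \<Longrightarrow> qscalar c \<in> R"
  unfolding qscalar_eq_qsmul by (rule order_qsmul[OF _ order_qone])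

lemma order_qpow: "x \<in> R \<Longrightarrow> qpow a b x m \<in> R"
  by (induction m) (auto simp: order_qone order_qmul)

lemma qval_ge_lincomb:
  assumes "\<forall>g\<in>set G. qval_ge v B g" and "\<forall>i. c i \<in> OF v"
  shows "qval_ge v B (lincomb c G)"
  using assms
proof (induction G arbitrary: c)
  case Nil
  then show ?case by (simp add: qzero_def)
next
  case (Cons g G)
  have IH: "qval_ge v B (lincomb (\<lambda>i. c (Suc i)) G)"
    using Cons by auto
  have "val_ge v B (c 0 * y)" if "val_ge v B y" for y
    using val_ge_mult[of 0 "c 0" B y] Cons.prems(2) that by (simp add: OF_iff_val_ge)
  then show ?case
    using IH Cons.prems(1)
    by (cases g; cases "lincomb (\<lambda>i. c (Suc i)) G") (auto intro!: val_ge_add)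
qed

lemma ex_qval_ge_bound: "\<exists>B. \<forall>g\<in>set G. qval_ge v B g"
proof (induction G)
  case Nil
  then show ?case by simp
next
  case (Cons g G)
  then obtain B where B: "\<forall>g\<in>set G. qval_ge v B g"
    by auto
  obtain x0 x1 x2 x3 where g: "g = (x0, x1, x2, x3)"
    by (cases g)
  define C where "C = min B (min (v x0) (min (v x1) (min (v x2) (v x3))))"
  have "qval_ge v C y" if "qval_ge v B y" for y
    using that by (cases y) (auto simp: C_def intro: val_ge_mono)
  moreover have "qval_ge v C g"
    using g by (auto simp: C_def intro: val_ge_mono[OF val_ge_self])
  ultimately show ?case
    using B by (intro exI[of _ C]) auto
qed

lemma order_qval_bounded: "\<exists>B. \<forall>y\<in>R. qval_ge v B y"
proof -
  obtain G where G: "R = {lincomb c G | c. \<forall>i. c i \<in> OF v}"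
    by (rule order_lincomb)
  obtain B where "\<forall>g\<in>set G. qval_ge v B g"
    using ex_qval_ge_bound by blast
  then show ?thesis
    using qval_ge_lincomb G by blast
qed

lemma nrd_bounded: "\<exists>C. \<forall>y\<in>R. val_ge v C (nrd a b y)"
proof -
  obtain B where B: "\<forall>y\<in>R. qval_ge v B y"
    using order_qval_bounded by blast
  define C where "C = min 0 (min (v a) (min (v b) (v (a * b)))) + B + B"
  have "val_ge v C (nrd a b y)" if "y \<in> R" for y
  proof -
    obtain x0 x1 x2 x3 where y: "y = (x0, x1, x2, x3)"
      by (cases y)
    have x: "val_ge v B x0" "val_ge v B x1" "val_ge v B x2" "val_ge v B x3"
      using B \<open>y \<in> R\<close> y by auto
    have "val_ge v C (c * xi * xi)" if "c \<in> {1, a, b, a * b}" "val_ge v B xi" for c xi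
    proof -
      have "val_ge v (v c + B + B) (c * xi * xi)"
        using val_ge_mult[OF val_ge_mult[OF val_ge_self that(2)] that(2)] .
      moreover have "C \<le> v c + B + B"
        using that(1) val_one by (auto simp: C_def)
      ultimately show ?thesis
        by (rule val_ge_mono)
    qed
    then have "val_ge v C (1 * x0 * x0)" "val_ge v C (a * x1 * x1)"
      "val_ge v C (b * x2 * x2)" "val_ge v C (a * b * x3 * x3)"
      using x by blast+
    then show ?thesis
      using y by (simp add: val_ge_add val_ge_diff)
  qed
  then show ?thesis by blast
qed

lemma nrd_in_OF:
  assumes "x \<in> R"
  shows "nrd a b x \<in> OF v"
proof -
  obtain C where "\<forall>y\<in>R. val_ge v C (nrd a b y)"
    using nrd_bounded by blast
  then have "val_ge v C (nrd a b x ^ m)" for m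
    using order_qpow[OF assms, of m] nrd_qpow by metis
  then show ?thesis
    by (rule OF_if_powers_bounded)
qed

lemma trd_in_OF: "x \<in> R \<Longrightarrow> trd x \<in> OF v"
  unfolding trd_eq_nrd[of _ a b]
  by (intro OF_diff OF_one nrd_in_OF order_qadd order_qone)

lemma order_qconj: "x \<in> R \<Longrightarrow> qconj x \<in> R"
  unfolding qconj_eq_trd_minus
  by (intro order_qadd order_qsmul order_qone order_qneg trd_in_OF)

lemma nrd_qunit:
  assumes "x \<in> qunits a b R"
  shows "nrd a b x \<in> OF_units v"
proof -
  obtain y where "x \<in> R" "y \<in> R" "qmul a b x y = qone"
    using assms unfolding qunits_def by blast
  then have "nrd a b x * nrd a b y = 1" "nrd a b x \<in> OF v" "nrd a b y \<in> OF v"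
    using nrd_in_OF by (auto simp flip: nrd_qmul simp: nrd_qone)
  then show ?thesis
    using PF_mult_right one_notin_PF unfolding OF_units_iff by metis
qed

lemma qscalar_qunit:
  assumes "u \<in> OF_units v"
  shows "qscalar u \<in> qunits a b R"
proof -
  have "u \<noteq> 0"
    using assms unfolding OF_units_def by simp
  moreover have "qscalar u \<in> R" "qscalar (inverse u) \<in> R"
    using assms OF_units_inverse OF_units_OF order_qscalar by blast+
  ultimately show ?thesis
    unfolding qunits_def
    by (auto simp: qmul_qscalar qscalar_one mult.commute intro!: bexI[of _ "qscalar (inverse u)"])
qed

end

section \<open>Residue maps of orders\<close>

locale residue_hom = quaternion_order v a b R for v :: "'a::field \<Rightarrow> int" and a b R +
  fixes phi :: "'a quat \<Rightarrow> 'a"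
  assumes phi_OF: "x \<in> R \<Longrightarrow> phi x \<in> OF v"
    and phi_add: "x \<in> R \<Longrightarrow> y \<in> R \<Longrightarrow> phi (qadd x y) - (phi x + phi y) \<in> PF v"
    and phi_mult: "x \<in> R \<Longrightarrow> y \<in> R \<Longrightarrow> phi (qmul a b x y) - phi x * phi y \<in> PF v"
    and phi_one: "phi qone - 1 \<in> PF v"
    and phi_surj: "c \<in> OF v \<Longrightarrow> \<exists>x\<in>R. phi x - c \<in> PF v"
begin

lemma phi_diff:
  assumes x: "x \<in> R" and y: "y \<in> R"
  shows "phi (qadd x (qneg y)) - (phi x - phi y) \<in> PF v"
proof -
  have "qadd x (qneg y) \<in> R"
    using x y by (intro order_qadd order_qneg)
  then have "phi x - (phi (qadd x (qneg y)) + phi y) \<in> PF v"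
    using phi_add[OF _ y] by (metis qadd_qneg_cancel)
  then have "- (phi x - (phi (qadd x (qneg y)) + phi y)) \<in> PF v"
    by (rule PF_uminus)
  then show ?thesis
    by (simp add: algebra_simps)
qed

lemma phi_qone_notin_PF: "phi qone \<notin> PF v"
  using PF_diff[OF _ phi_one] one_notin_PF by fastforce

lemma phi_qscalar_PF:
  assumes d: "d \<in> OF v" and phi_d: "phi (qscalar d) \<in> PF v"
  shows "d \<in> PF v"
proof (rule ccontr)
  assume "d \<notin> PF v"
  then have "d \<in> OF_units v"
    using d unfolding OF_units_iff by simp
  then have "inverse d \<in> OF v" "qmul a b (qscalar d) (qscalar (inverse d)) = qone"
    using OF_units_inverse OF_units_OF unfolding OF_units_def by (auto simp: qmul_qscalar qscalar_one)
  then have "phi qone - phi (qscalar d) * phi (qscalar (inverse d)) \<in> PF v"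
    using phi_mult order_qscalar d by metis
  moreover have "phi (qscalar d) * phi (qscalar (inverse d)) \<in> PF v"
    using PF_mult_right[OF phi_d] phi_OF order_qscalar \<open>inverse d \<in> OF v\<close> by blast
  ultimately show False
    using PF_add phi_qone_notin_PF by fastforce
qed

lemma phi_qscalar_surj:
  assumes "finite_residue_field v" and "y \<in> OF v"
  shows "\<exists>c\<in>OF v. phi (qscalar c) - y \<in> PF v"
proof -
  have "\<exists>c\<in>OF v. (phi (qscalar c), y) \<in> residue_rel v"
  proof (rule finite_quotient_inj_imp_surj[OF equiv_residue_rel finite_residue_quotient])
    show "(\<lambda>c. phi (qscalar c)) ` OF v \<subseteq> OF v"
      using phi_OF order_qscalar by blast
    fix c d assume c: "c \<in> OF v" and d: "d \<in> OF v"
      and "(phi (qscalar c), phi (qscalar d)) \<in> residue_rel v"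
    then have "phi (qscalar c) - phi (qscalar d) \<in> PF v"
      unfolding residue_rel_def by simp
    with phi_diff[OF order_qscalar[OF c] order_qscalar[OF d]]
    have "phi (qscalar (c - d)) \<in> PF v"
      unfolding qscalar_diff by (rule PF_cong_PF)
    then show "(c, d) \<in> residue_rel v"
      using c d OF_diff phi_qscalar_PF unfolding residue_rel_def by blast
  qed (use assms in simp_all)
  then show ?thesis
    unfolding residue_rel_def by blast
qed

lemma phi_qzero: "phi qzero \<in> PF v"
  using phi_diff[OF order_qone order_qone] by (simp add: qadd_qneg_self)

lemma kernel_left_ideal: "left_ideal a b R {x \<in> R. phi x \<in> PF v}"
  unfolding left_ideal_def
proof (intro conjI ballI)
  show "qzero \<in> {x \<in> R. phi x \<in> PF v}"
    using order_qzero phi_qzero by simp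
next
  fix x y assume "x \<in> {x \<in> R. phi x \<in> PF v}" "y \<in> {x \<in> R. phi x \<in> PF v}"
  then show "qadd x y \<in> {x \<in> R. phi x \<in> PF v}"
    using phi_add order_qadd PF_add PF_cong_PF by blast
next
  fix x assume x: "x \<in> {x \<in> R. phi x \<in> PF v}"
  then have "phi (qneg x) - (phi qzero - phi x) \<in> PF v"
    using phi_diff[OF order_qzero] by (simp add: qadd_qzero_qneg)
  then show "qneg x \<in> {x \<in> R. phi x \<in> PF v}"
    using x order_qneg PF_cong_PF PF_diff phi_qzero by blast
next
  fix r x assume r: "r \<in> R" and x: "x \<in> {x \<in> R. phi x \<in> PF v}"
  then have "phi r * phi x \<in> PF v"
    using PF_mult_left phi_OF by blast
  then show "qmul a b r x \<in> {x \<in> R. phi x \<in> PF v}"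
    using r x phi_mult order_qmul PF_cong_PF by blast
qed auto

lemma phi_left_inverse:
  assumes y: "y \<in> R" and unit: "phi y \<notin> PF v"
  shows "\<exists>r\<in>R. phi (qmul a b r y) - 1 \<in> PF v"
proof -
  have unit: "phi y \<in> OF_units v"
    using phi_OF[OF y] unit unfolding OF_units_iff by blast
  then obtain r where r: "r \<in> R" "phi r - inverse (phi y) \<in> PF v"
    using phi_surj OF_units_inverse OF_units_OF by blast
  have "phi r * phi y - 1 = (phi r - inverse (phi y)) * phi y"
    using unit unfolding OF_units_def by (simp add: algebra_simps)
  then have "phi r * phi y - 1 \<in> PF v"
    using PF_mult_right[OF r(2)] phi_OF y by simp
  then show ?thesis
    using phi_mult[OF r(1) y] PF_cong_trans r(1) by blast
qed

lemma kernel_maximal_left_ideal: "maximal_left_ideal a b R {x \<in> R. phi x \<in> PF v}"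
  unfolding maximal_left_ideal_def
proof (intro conjI allI impI)
  show "left_ideal a b R {x \<in> R. phi x \<in> PF v}"
    by (rule kernel_left_ideal)
  show "{x \<in> R. phi x \<in> PF v} \<noteq> R"
    using order_qone phi_qone_notin_PF by blast
next
  fix I assume "left_ideal a b R I \<and> {x \<in> R. phi x \<in> PF v} \<subseteq> I"
  then have I: "I \<subseteq> R" "\<And>x y. x \<in> I \<Longrightarrow> y \<in> I \<Longrightarrow> qadd x y \<in> I" "\<And>x. x \<in> I \<Longrightarrow> qneg x \<in> I"
      "\<And>r x. r \<in> R \<Longrightarrow> x \<in> I \<Longrightarrow> qmul a b r x \<in> I"
    and kernel: "{x \<in> R. phi x \<in> PF v} \<subseteq> I"
    unfolding left_ideal_def by auto
  show "I = {x \<in> R. phi x \<in> PF v} \<or> I = R"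
  proof (cases "I \<subseteq> {x \<in> R. phi x \<in> PF v}")
    case False
    then obtain y where y: "y \<in> I" "y \<in> R" "phi y \<notin> PF v"
      using I(1) by blast
    then obtain r where r: "r \<in> R" and ry: "phi (qmul a b r y) - 1 \<in> PF v"
      using phi_left_inverse by blast
    have ryR: "qmul a b r y \<in> R"
      using order_qmul r(1) y(2) by blast
    have "phi (qadd (qmul a b r y) (qneg qone)) \<in> PF v"
      using phi_diff[OF ryR order_qone] PF_cong_PF PF_cong_trans[OF ry PF_cong_sym[OF phi_one]]
      by simp
    then have "qadd (qmul a b r y) (qneg qone) \<in> I"
      using kernel order_qadd[OF ryR order_qneg[OF order_qone]] by blast
    then have "qadd (qmul a b r y) (qneg (qadd (qmul a b r y) (qneg qone))) \<in> I"
      using I(2)[OF I(4)[OF r(1) y(1)] I(3)] by blast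
    then have "qone \<in> I"
      by (simp add: qadd_qneg_qone)
    then have "R \<subseteq> I"
      using I(4) by (metis qmul_qone_right subsetI)
    then show ?thesis
      using I(1) by blast
  qed (use kernel in blast)
qed

lemma residue_hom_qconj: "residue_hom v a b R (\<lambda>x. phi (qconj x))"
proof unfold_locales
  fix x y assume x: "x \<in> R" and y: "y \<in> R"
  show "phi (qconj (qadd x y)) - (phi (qconj x) + phi (qconj y)) \<in> PF v"
    using phi_add[OF order_qconj[OF x] order_qconj[OF y]] by (simp add: qconj_qadd)
  have "phi (qconj (qmul a b x y)) - phi (qconj y) * phi (qconj x) \<in> PF v"
    using phi_mult[OF order_qconj[OF y] order_qconj[OF x]] by (simp add: qconj_qmul)
  then show "phi (qconj (qmul a b x y)) - phi (qconj x) * phi (qconj y) \<in> PF v"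
    by (simp add: mult.commute)
next
  fix c assume "c \<in> OF v"
  then obtain x where "x \<in> R" "phi x - c \<in> PF v"
    using phi_surj by blast
  then show "\<exists>x\<in>R. phi (qconj x) - c \<in> PF v"
    using order_qconj qconj_qconj by metis
qed (use phi_OF order_qconj phi_one is_order discrete_valuation in \<open>auto simp: qconj_qone\<close>)

lemma qconj_congruent:
  assumes finite: "finite_residue_field v"
    and kernel: "\<And>x. x \<in> R \<Longrightarrow> phi x \<in> PF v \<Longrightarrow> phi (qconj x) \<in> PF v"
    and x: "x \<in> R"
  shows "phi (qconj x) - phi x \<in> PF v"
proof -
  obtain c where c: "c \<in> OF v" "phi (qscalar c) - phi x \<in> PF v"
    using phi_qscalar_surj[OF finite phi_OF[OF x]] by blast
  let ?j = "qadd x (qneg (qscalar c))"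
  have j: "?j \<in> R"
    using order_qadd order_qneg order_qscalar x c(1) by blast
  have "phi ?j \<in> PF v"
    using phi_diff[OF x order_qscalar[OF c(1)]] PF_cong_PF PF_cong_sym[OF c(2)]
    by (metis minus_diff_eq PF_uminus)
  then have "phi (qconj ?j) \<in> PF v"
    using kernel[OF j] by blast
  then have "phi (qconj x) - phi (qscalar c) \<in> PF v"
    using phi_diff[OF order_qconj[OF x] order_qscalar[OF c(1)]] PF_cong_PF PF_cong_sym
    by (metis qconj_qadd qconj_qneg qconj_qscalar PF_uminus minus_diff_eq)
  then show ?thesis
    using PF_cong_trans c(2) by blast
qed

lemma nrd_square_mod_PF:
  assumes finite: "finite_residue_field v"
    and kernel: "\<And>x. x \<in> R \<Longrightarrow> phi x \<in> PF v \<Longrightarrow> phi (qconj x) \<in> PF v"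
    and x: "x \<in> R"
  shows "\<exists>c\<in>OF v. nrd a b x - c * c \<in> PF v"
proof -
  obtain c where c: "c \<in> OF v" "phi (qscalar c) - phi x \<in> PF v"
    using phi_qscalar_surj[OF finite phi_OF[OF x]] by blast
  have c': "qscalar c \<in> R"
    using order_qscalar[OF c(1)] .
  have "phi x * phi (qconj x) - phi (qscalar c) * phi (qscalar c) \<in> PF v"
    using PF_cong_mult[OF phi_OF[OF x] phi_OF[OF c']] PF_cong_sym[OF c(2)]
      PF_cong_trans[OF qconj_congruent[OF finite kernel x] PF_cong_sym[OF c(2)]]
    by blast
  then have "phi (qscalar (nrd a b x)) - phi (qscalar (c * c)) \<in> PF v"
    using phi_mult[OF x order_qconj[OF x]] phi_mult[OF c' c'] PF_cong_trans PF_cong_sym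
    by (metis qmul_qconj qmul_qscalar)
  with phi_diff[OF order_qscalar order_qscalar] nrd_in_OF[OF x] OF_mult[OF c(1) c(1)]
  have "phi (qscalar (nrd a b x - c * c)) \<in> PF v"
    unfolding qscalar_diff using PF_cong_PF by blast
  then have "nrd a b x - c * c \<in> PF v"
    using phi_qscalar_PF OF_diff nrd_in_OF[OF x] OF_mult[OF c(1) c(1)] by blast
  with c(1) show ?thesis by blast
qed

end

context quaternion_order
begin

lemma eichler_zero_nrd_square_mod_PF:
  assumes "eichler_zero v a b R" and "finite_residue_field v" and "x \<in> R"
  shows "\<exists>c\<in>OF v. nrd a b x - c * c \<in> PF v"
proof -
  obtain psi where
      "\<forall>x\<in>R. psi x \<in> OF v"
      "\<forall>x\<in>R. \<forall>y\<in>R. psi (qadd x y) - (psi x + psi y) \<in> PF v"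
      "\<forall>x\<in>R. \<forall>y\<in>R. psi (qmul a b x y) - psi x * psi y \<in> PF v"
      "psi qone - 1 \<in> PF v"
      "\<forall>c\<in>OF v. \<exists>x\<in>R. psi x - c \<in> PF v"
    and jacobson: "\<forall>x\<in>R. psi x \<in> PF v \<longleftrightarrow> x \<in> jacobson a b R"
    using assms(1) unfolding eichler_zero_def by blast
  then interpret residue_hom v a b R psi
    using is_order discrete_valuation by unfold_locales auto
  interpret conj: residue_hom v a b R "\<lambda>x. psi (qconj x)"
    by (rule residue_hom_qconj)
  have "psi (qconj y) \<in> PF v" if "y \<in> R" "psi y \<in> PF v" for y
    using jacobson that conj.kernel_maximal_left_ideal unfolding jacobson_def by blast
  then show ?thesis
    using nrd_square_mod_PF assms(2,3) by blast
qed

end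

theorem lemma3p4:
  fixes v :: "'a::field \<Rightarrow> int" and a b :: 'a and R :: "'a quat set"
  assumes "nonarch_local_field v"
    and "nondyadic v"
    and "a \<noteq> 0" and "b \<noteq> 0"
    and "bass v a b R"
    and "eichler_zero v a b R"
  shows "nrd a b ` qunits a b R = {u * u | u. u \<in> OF_units v}"
proof -
  have complete: "v_complete v" and finite: "finite_residue_field v"
    and "discrete_valuation v"
    using assms(1) unfolding nonarch_local_field_def by auto
  moreover have "is_order v a b R"
    using assms(5) unfolding bass_def by simp
  ultimately interpret quaternion_order v a b R
    by unfold_locales
  have two: "2 \<in> OF_units v"
    using assms(2) unfolding nondyadic_def .
  show ?thesis
  proof (intro equalityI subsetI)
    fix n assume "n \<in> nrd a b ` qunits a b R"
    then obtain x where x: "x \<in> qunits a b R" "n = nrd a b x"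
      by blast
    then obtain c where "c \<in> OF v" "n - c * c \<in> PF v"
      using eichler_zero_nrd_square_mod_PF[OF assms(6) finite] unfolding qunits_def by blast
    then show "n \<in> {u * u | u. u \<in> OF_units v}"
      using square_of_unit_if_square_mod_PF[OF complete two] nrd_qunit x by blast
  next
    fix n assume "n \<in> {u * u | u. u \<in> OF_units v}"
    then show "n \<in> nrd a b ` qunits a b R"
      using qscalar_qunit by (auto simp: nrd_qscalar intro!: image_eqI)
  qed
qed

end
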